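(* For $n\ge3$ and $k\ge4$, the number of cyclic permutations $\pi\in\mathfrak S_n$ whose one-line notation avoids $\delta_k=k(k-1)\cdots21$, such that every cyclic rotation of $C(\pi)$ avoids $1342$, and with $\pi_1=n-1$ and $\pi_n=1$, equals $b^\circ_{n-1,k-1}(1342)$, where $b^\circ_{m,j}(1342)$ denotes the number of cyclic permutations $\sigma\in\mathfrak S_m$ whose one-line notation avoids $\delta_j$, such that every cyclic rotation of $C(\sigma)$ avoids $1342$, and with $\sigma_1=m$.
   Context: A permutation $\pi\in\mathfrak S_n$ is cyclic if it consists of a single $n$-cycle. For cyclic $\pi$, $C(\pi)=(1,c_2,\dots,c_n)$ with $c_2=\pi(1)$, $c_{i+1}=\pi(c_i)$; its cyclic rotations are the sequences $c_ic_{i+1}\cdots c_nc_1\cdots c_{i-1}$ (with $c_1=1$). A sequence avoids a pattern $\sigma\in\mathfrak S_m$ if no subsequence of length $m$ is in the same relative order as $\sigma$. The one-line notation of $\pi$ is $\pi_1\cdots\pi_n$, $\pi_i=\pi(i)$. *)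

theory Defs
  imports "HOL-Combinatorics.Permutations"
begin

definition contains_pattern :: "nat list \<Rightarrow> nat list \<Rightarrow> bool" where
  "contains_pattern w sigma \<longleftrightarrow>
     (\<exists>idx :: nat \<Rightarrow> nat.
        (\<forall>a b. a < b \<and> b < length sigma \<longrightarrow> idx a < idx b) \<and>
        (\<forall>a < length sigma. idx a < length w) \<and>
        (\<forall>a < length sigma. \<forall>b < length sigma.
            (w ! idx a < w ! idx b \<longleftrightarrow> sigma ! a < sigma ! b)))"

definition avoids :: "nat list \<Rightarrow> nat list \<Rightarrow> bool" where
  "avoids w sigma \<longleftrightarrow> \<not> contains_pattern w sigma"

definition delta :: "nat \<Rightarrow> nat list" where
  "delta k = rev [1..<k+1]"

definition one_line :: "nat \<Rightarrow> (nat \<Rightarrow> nat) \<Rightarrow> nat list" where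
  "one_line n p = map p [1..<n+1]"

definition cyclic_perm :: "nat \<Rightarrow> (nat \<Rightarrow> nat) \<Rightarrow> bool" where
  "cyclic_perm n p \<longleftrightarrow> p permutes {1..n} \<and> (\<forall>j\<in>{1..n}. \<exists>i. (p ^^ i) 1 = j)"

definition cycle_form :: "nat \<Rightarrow> (nat \<Rightarrow> nat) \<Rightarrow> nat list" where
  "cycle_form n p = map (\<lambda>i. (p ^^ i) 1) [0..<n]"

definition b_circ_1342 :: "nat \<Rightarrow> nat \<Rightarrow> nat" where
  "b_circ_1342 m j = card {s. cyclic_perm m s \<and> avoids (one_line m s) (delta j)
       \<and> (\<forall>i < m. avoids (rotate i (cycle_form m s)) [1,3,4,2]) \<and> s 1 = m}"

end

theory Submission
  imports Defs "HOL-Combinatorics.Orbits"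
begin

text \<open>
  Composing with the transposition (1 n) deletes n from the cycle: since p n = 1 and p 1 = n - 1,
  the cycle (1, n-1, ..., p^-1(n), n) of p becomes the cycle (1, n-1, ..., p^-1(n)) of
  s = (1 n) o p, while in one-line notation the final entry 1 disappears and the entry n
  becomes 1.  Cyclic avoidance of 1342 survives deleting n, and also reinserting it, because an
  occurrence using n as its 4 could use n - 1 instead, which follows n cyclically after only the
  entry 1.  A decreasing subsequence of s of length k - 1 ending in its entry 1 can be rerouted
  through its entry 2, which lies further right (otherwise 2, p^-1(n), n, p^-1(2) would form a
  cyclic 1342 in C(p)), and then extended by the final 1 of p.  Conversely, a decreasing
  subsequence of p of length k loses its last entry and routes its entry n through the initial
  n - 1.
\<close>

section \<open>The cycle form of a cyclic permutation\<close>

lemma cycle_form_nth: "l < N \<Longrightarrow> cycle_form N p ! l = (p ^^ l) 1"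
  unfolding cycle_form_def by simp

lemma length_cycle_form [simp]: "length (cycle_form N p) = N"
  unfolding cycle_form_def by simp

lemma cycle_form_Suc: "cycle_form (Suc N) p = cycle_form N p @ [(p ^^ N) 1]"
  unfolding cycle_form_def by simp

lemma cyclic_permI: "p permutes {1..N} \<Longrightarrow> {1..N} \<subseteq> set (cycle_form N p) \<Longrightarrow> cyclic_perm N p"
  unfolding cyclic_perm_def cycle_form_def by auto

lemma cyclic_perm_orbit:
  assumes "cyclic_perm N p" "1 \<le> N"
  shows "orbit p 1 = {1..N}" and "funpow_dist1 p 1 1 = N"
proof -
  have perm: "p permutes {1..N}" using assms(1) unfolding cyclic_perm_def by simp
  then have "permutation p" using permutation_permutes by blast
  then have orbit_eq: "orbit p 1 = range (\<lambda>n. (p ^^ n) 1)" by (auto simp: orbit_altdef_permutation)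
  have "(p ^^ n) 1 \<in> {1..N}" for n
    by (induction n) (use assms(2) permutes_in_image[OF perm] in auto)
  then show orbit: "orbit p 1 = {1..N}" using assms(1) unfolding orbit_eq cyclic_perm_def by auto
  have "1 \<in> orbit p 1" using orbit assms(2) by simp
  then have "card (orbit p 1) = funpow_dist1 p 1 1"
    by (subst orbit_conv_funpow_dist1) (simp_all add: card_image inj_on_funpow_dist1)
  then show "funpow_dist1 p 1 1 = N" using orbit by simp
qed

lemma cycle_form_cyclic_perm:
  assumes "cyclic_perm N p" "1 \<le> N"
  shows "distinct (cycle_form N p)" and "set (cycle_form N p) = {1..N}" and "(p ^^ N) 1 = 1"
proof -
  note orbit = cyclic_perm_orbit[OF assms]
  have self: "1 \<in> orbit p 1" using orbit(1) assms(2) by simp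
  show "distinct (cycle_form N p)"
    using inj_on_funpow_dist1[OF self] orbit(2)
    by (simp add: cycle_form_def distinct_map atLeast0LessThan)
  show "set (cycle_form N p) = {1..N}"
    using orbit_conv_funpow_dist1[OF self] orbit by (simp add: cycle_form_def atLeast0LessThan)
  show "(p ^^ N) 1 = 1" using funpow_dist1_prop[OF self] unfolding orbit(2) .
qed

lemma cycle_form_transpose_comp:
  assumes "\<And>l. 0 < l \<Longrightarrow> l < N \<Longrightarrow> (f ^^ l) 1 \<notin> {1, y}"
  shows "cycle_form N (transpose 1 y \<circ> f) = cycle_form N f"
proof -
  have "((transpose 1 y \<circ> f) ^^ l) 1 = (f ^^ l) 1" if "l < N" for l
  using that proof (induction l)
    case (Suc l)
    then show ?case using assms[of "Suc l"] by simp
  qed simp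
  then show ?thesis unfolding cycle_form_def by simp
qed

lemma funpow_cyclic_perm_pred:
  assumes "cyclic_perm (Suc m) p" "p x = 1"
  shows "(p ^^ m) 1 = x"
proof -
  have "inj p" using assms(1) permutes_inj unfolding cyclic_perm_def by blast
  moreover have "p ((p ^^ m) 1) = p x"
    using cycle_form_cyclic_perm(3)[OF assms(1)] assms(2) by (simp add: funpow_swap1)
  ultimately show ?thesis by (simp add: inj_eq)
qed

lemma cyclic_perm_remove_last:
  assumes "cyclic_perm (Suc m) p" "p (Suc m) = 1" "1 \<le> m"
  shows "cyclic_perm m (transpose 1 (Suc m) \<circ> p)"
    and "cycle_form (Suc m) p = cycle_form m (transpose 1 (Suc m) \<circ> p) @ [Suc m]"
proof -
  have perm: "p permutes {1..Suc m}" using assms(1) unfolding cyclic_perm_def by simp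
  have dist: "distinct (cycle_form (Suc m) p)" and set: "set (cycle_form (Suc m) p) = {1..Suc m}"
    using cycle_form_cyclic_perm[OF assms(1)] by simp_all
  have last: "(p ^^ m) 1 = Suc m" using funpow_cyclic_perm_pred[OF assms(1,2)] .
  have "(p ^^ l) 1 \<notin> {(p ^^ 0) 1, (p ^^ m) 1}" if "0 < l" "l < m" for l
    using that nth_eq_iff_index_eq[OF dist, of l 0] nth_eq_iff_index_eq[OF dist, of l m]
    by (auto simp: cycle_form_nth)
  then have same: "cycle_form m (transpose 1 (Suc m) \<circ> p) = cycle_form m p"
    by (intro cycle_form_transpose_comp) (use last in simp)
  show split: "cycle_form (Suc m) p = cycle_form m (transpose 1 (Suc m) \<circ> p) @ [Suc m]"
    by (simp only: cycle_form_Suc same last)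
  have "transpose 1 (Suc m) \<circ> p permutes {1..Suc m}"
    using assms(3) by (intro permutes_compose[OF perm] permutes_swap_id) auto
  then have "transpose 1 (Suc m) \<circ> p permutes {1..m}"
    by (rule permutes_superset) (use assms(2) in \<open>auto simp: le_Suc_eq\<close>)
  moreover have "{1..m} \<subseteq> set (cycle_form m (transpose 1 (Suc m) \<circ> p))"
  proof
    fix x assume "x \<in> {1..m}"
    then have "x \<in> set (cycle_form (Suc m) p)" "x \<noteq> Suc m" using set by auto
    then show "x \<in> set (cycle_form m (transpose 1 (Suc m) \<circ> p))" unfolding split by simp
  qed
  ultimately show "cyclic_perm m (transpose 1 (Suc m) \<circ> p)"
    by (rule cyclic_permI)
qed

lemma cyclic_perm_insert_last:
  assumes "cyclic_perm m s" "1 \<le> m"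
  shows "cyclic_perm (Suc m) (transpose 1 (Suc m) \<circ> s)"
    and "cycle_form (Suc m) (transpose 1 (Suc m) \<circ> s) = cycle_form m s @ [Suc m]"
proof -
  define p where "p = transpose 1 (Suc m) \<circ> s"
  have perm: "s permutes {1..m}" using assms(1) unfolding cyclic_perm_def by simp
  have dist: "distinct (cycle_form m s)" and set: "set (cycle_form m s) = {1..m}"
    and ret: "(s ^^ m) 1 = 1"
    using cycle_form_cyclic_perm[OF assms] by simp_all
  have "(s ^^ l) 1 \<notin> {1, Suc m}" if "0 < l" "l < m" for l
  proof -
    have "(s ^^ l) 1 \<in> set (cycle_form m s)" using that by (simp add: cycle_form_def)
    then show ?thesis
      using that nth_eq_iff_index_eq[OF dist, of l 0] set by (auto simp: cycle_form_nth)
  qed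
  then have same: "cycle_form m p = cycle_form m s"
    unfolding p_def by (rule cycle_form_transpose_comp)
  obtain m' where m': "m = Suc m'" using assms(2) by (cases m) auto
  have "(p ^^ m') 1 = (s ^^ m') 1"
    using arg_cong[OF same, of "\<lambda>w. w ! m'"] m' by (simp add: cycle_form_nth)
  then have "(p ^^ m) 1 = transpose 1 (Suc m) ((s ^^ m) 1)"
    by (simp add: m' p_def)
  then have last: "(p ^^ m) 1 = Suc m" using ret by simp
  show split: "cycle_form (Suc m) p = cycle_form m s @ [Suc m]"
    by (simp only: cycle_form_Suc same last)
  have "p permutes {1..Suc m}"
    unfolding p_def using assms(2)
    by (intro permutes_compose[OF permutes_subset[OF perm]] permutes_swap_id) auto
  then show "cyclic_perm (Suc m) p"
    by (rule cyclic_permI) (use set in \<open>auto simp: split\<close>)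
qed

section \<open>Decreasing subsequences\<close>

definition has_decreasing_subseq :: "(nat \<Rightarrow> nat) \<Rightarrow> nat set \<Rightarrow> nat \<Rightarrow> bool" where
  "has_decreasing_subseq f P K \<longleftrightarrow>
     (\<exists>q. (\<forall>a b. a < b \<longrightarrow> b < K \<longrightarrow> q a < q b \<and> f (q b) < f (q a)) \<and> (\<forall>a<K. q a \<in> P))"

lemma delta_nth: "a < K \<Longrightarrow> delta K ! a = K - a"
  unfolding delta_def by (simp del: upt_Suc add: rev_nth)

lemma length_delta [simp]: "length (delta K) = K"
  unfolding delta_def by simp

lemma one_line_nth: "i < N \<Longrightarrow> one_line N f ! i = f (Suc i)"
  unfolding one_line_def by (simp del: upt_Suc)

lemma length_one_line [simp]: "length (one_line N f) = N"
  unfolding one_line_def by simp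

lemma contains_delta_iff:
  "contains_pattern (one_line N f) (delta K) \<longleftrightarrow> has_decreasing_subseq f {1..N} K"
proof
  assume "contains_pattern (one_line N f) (delta K)"
  then obtain idx where mono: "\<forall>a b. a < b \<and> b < K \<longrightarrow> idx a < idx b"
    and range: "\<forall>a<K. idx a < N"
    and order: "\<forall>a<K. \<forall>b<K. one_line N f ! idx a < one_line N f ! idx b \<longleftrightarrow> K - a < K - b"
    unfolding contains_pattern_def by (auto simp: delta_nth)
  have "f (Suc (idx b)) < f (Suc (idx a))" if "a < b" "b < K" for a b
    using order that range by (simp add: one_line_nth)
  then show "has_decreasing_subseq f {1..N} K"
    unfolding has_decreasing_subseq_def using mono range
    by (intro exI[of _ "\<lambda>a. Suc (idx a)"]) auto
next
  assume "has_decreasing_subseq f {1..N} K"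
  then obtain q where dec: "\<And>a b. a < b \<Longrightarrow> b < K \<Longrightarrow> q a < q b \<and> f (q b) < f (q a)"
    and range: "\<And>a. a < K \<Longrightarrow> q a \<in> {1..N}"
    unfolding has_decreasing_subseq_def by blast
  have nth: "one_line N f ! (q a - 1) = f (q a)" if "a < K" for a
    using range[OF that] by (subst one_line_nth) auto
  have order: "f (q a) < f (q b) \<longleftrightarrow> K - a < K - b" if "a < K" "b < K" for a b
    using dec[of a b] dec[of b a] that by (cases a b rule: linorder_cases) auto
  show "contains_pattern (one_line N f) (delta K)"
    unfolding contains_pattern_def
  proof (intro exI[of _ "\<lambda>a. q a - 1"] conjI allI impI)
    fix a b assume "a < b \<and> b < length (delta K)"
    then show "q a - 1 < q b - 1" using dec[of a b] range[of a] by fastforce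
  next
    fix a assume "a < length (delta K)"
    then show "q a - 1 < length (one_line N f)" using range[of a] by fastforce
  next
    fix a b assume "a < length (delta K)" "b < length (delta K)"
    then show "one_line N f ! (q a - 1) < one_line N f ! (q b - 1) \<longleftrightarrow> delta K ! a < delta K ! b"
      using nth[of a] nth[of b] order[of a b] by (simp add: delta_nth)
  qed
qed

lemma has_decreasing_subseq_card:
  assumes "has_decreasing_subseq f P K" "finite P"
  shows "K \<le> card P"
proof -
  obtain q where dec: "\<And>a b. a < b \<Longrightarrow> b < K \<Longrightarrow> q a < q b"
    and range: "q ` {..<K} \<subseteq> P"
    using assms(1) unfolding has_decreasing_subseq_def by blast
  have "inj_on q {..<K}"
  proof (rule inj_onI)
    fix a b assume "a \<in> {..<K}" "b \<in> {..<K}" "q a = q b"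
    then show "a = b" using dec[of a b] dec[of b a] by (cases a b rule: linorder_cases) auto
  qed
  then show ?thesis using card_inj_on_le[OF _ range assms(2)] by simp
qed

lemma has_decreasing_subseq_mono:
  "has_decreasing_subseq f P K \<Longrightarrow> P \<subseteq> Q \<Longrightarrow> has_decreasing_subseq f Q K"
  unfolding has_decreasing_subseq_def by blast

lemma has_decreasing_subseq_cong:
  assumes "has_decreasing_subseq f P K" "\<And>x. x \<in> P \<Longrightarrow> f x = g x"
  shows "has_decreasing_subseq g P K"
proof -
  obtain q where dec: "\<And>a b. a < b \<Longrightarrow> b < K \<Longrightarrow> q a < q b \<and> f (q b) < f (q a)"
    and range: "\<And>a. a < K \<Longrightarrow> q a \<in> P"
    using assms(1) unfolding has_decreasing_subseq_def by blast
  have "g (q b) < g (q a)" if "a < b" "b < K" for a b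
    using dec[OF that] range[of a] range[of b] assms(2)[of "q a"] assms(2)[of "q b"] that by simp
  then show ?thesis unfolding has_decreasing_subseq_def using dec range by blast
qed

lemma has_decreasing_subseq_snoc:
  assumes "has_decreasing_subseq f P K" "\<And>x. x \<in> P \<Longrightarrow> x < y \<and> f y < f x"
  shows "has_decreasing_subseq f (insert y P) (Suc K)"
proof -
  obtain q where dec: "\<And>a b. a < b \<Longrightarrow> b < K \<Longrightarrow> q a < q b \<and> f (q b) < f (q a)"
    and range: "\<And>a. a < K \<Longrightarrow> q a \<in> P"
    using assms(1) unfolding has_decreasing_subseq_def by blast
  have "(q(K := y)) a < (q(K := y)) b \<and> f ((q(K := y)) b) < f ((q(K := y)) a)"
    if "a < b" "b < Suc K" for a b
  proof (cases "b = K")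
    case True
    then show ?thesis using that assms(2)[OF range[of a]] by simp
  next
    case False
    then show ?thesis using that dec[of a b] by simp
  qed
  moreover have "(q(K := y)) a \<in> insert y P" if "a < Suc K" for a
    using that range[of a] by (cases "a = K") auto
  ultimately show ?thesis unfolding has_decreasing_subseq_def by blast
qed

lemma has_decreasing_subseq_butlast:
  assumes "has_decreasing_subseq f (insert y P) (Suc K)" "\<And>x. x \<in> P \<Longrightarrow> x < y"
  shows "has_decreasing_subseq f P K"
proof -
  obtain q where dec: "\<And>a b. a < b \<Longrightarrow> b < Suc K \<Longrightarrow> q a < q b \<and> f (q b) < f (q a)"
    and range: "\<And>a. a < Suc K \<Longrightarrow> q a \<in> insert y P"
    using assms(1) unfolding has_decreasing_subseq_def by blast
  have "q a \<in> P" if "a < K" for a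
  proof -
    have "q a < q K" using dec[of a K] that by simp
    moreover have "q K \<le> y" using range[of K] assms(2) by (auto simp: less_imp_le)
    moreover have "q a \<in> insert y P" using range[of a] that by simp
    ultimately show ?thesis by auto
  qed
  then show ?thesis
    unfolding has_decreasing_subseq_def by (intro exI[of _ q] conjI allI impI) (simp_all add: dec)
qed

text \<open>Since \<open>j\<close> and \<open>t\<close> form no inversion, a decreasing subsequence contains at most one of
  them, and \<open>t\<close> can take the place of \<open>j\<close>.\<close>

lemma has_decreasing_subseq_exchange:
  assumes "has_decreasing_subseq f P K" "inj_on f P" "t \<in> P" "t \<noteq> j" "j < t \<longleftrightarrow> f j < f t"
    and "\<And>x. x \<in> P \<Longrightarrow> x \<noteq> j \<Longrightarrow> x \<noteq> t \<Longrightarrow> (x < j \<longleftrightarrow> f j < f x) \<Longrightarrow>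
           (x < t \<longleftrightarrow> x < j) \<and> (f x < f t \<longleftrightarrow> f x < f j)"
  shows "has_decreasing_subseq f (P - {j}) K"
proof -
  obtain q where dec: "\<And>a b. a < b \<Longrightarrow> b < K \<Longrightarrow> q a < q b \<and> f (q b) < f (q a)"
    and range: "\<And>a. a < K \<Longrightarrow> q a \<in> P"
    using assms(1) unfolding has_decreasing_subseq_def by blast
  show ?thesis
  proof (cases "\<exists>a<K. q a = j")
    case False
    then show ?thesis unfolding has_decreasing_subseq_def using dec range by blast
  next
    case True
    then obtain a where a: "a < K" "q a = j" by blast
    have other: "q b \<in> P - {j, t} \<and> f (q b) \<noteq> f t \<and>
        (q b < t \<longleftrightarrow> q b < j) \<and> (f (q b) < f t \<longleftrightarrow> f (q b) < f j)"
      if "b < K" "b \<noteq> a" for b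
    proof -
      have "q b < q a \<and> f (q a) < f (q b) \<or> q a < q b \<and> f (q b) < f (q a)"
        using dec[of a b] dec[of b a] a(1) that by (cases a b rule: linorder_cases) auto
      then have inversion: "q b < q a \<longleftrightarrow> f (q a) < f (q b)" and "q b \<noteq> q a" by auto
      moreover have "q b \<noteq> t" using inversion assms(4,5) a(2) by auto
      moreover have "f (q b) \<noteq> f t"
        using \<open>q b \<noteq> t\<close> inj_onD[OF assms(2)] range[OF that(1)] assms(3) by blast
      ultimately show ?thesis using assms(6)[of "q b"] range[OF that(1)] a(2) by auto
    qed
    have "(q(a := t)) b < (q(a := t)) c \<and> f ((q(a := t)) c) < f ((q(a := t)) b)"
      if "b < c" "c < K" for b c
      using dec[OF that] other[of b] other[of c] that a by (cases "b = a"; cases "c = a") auto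
    moreover have "(q(a := t)) b \<in> P - {j}" if "b < K" for b
      using other[of b] assms(3,4) that by auto
    ultimately show ?thesis unfolding has_decreasing_subseq_def by blast
  qed
qed

section \<open>Cyclic occurrences of 1342\<close>

definition pattern_1342_at :: "nat list \<Rightarrow> nat \<Rightarrow> nat \<Rightarrow> nat \<Rightarrow> nat \<Rightarrow> bool" where
  "pattern_1342_at w a b c d \<longleftrightarrow> w ! a < w ! d \<and> w ! d < w ! b \<and> w ! b < w ! c"

definition cyclically_ordered :: "nat \<Rightarrow> nat \<Rightarrow> nat \<Rightarrow> nat \<Rightarrow> nat \<Rightarrow> bool" where
  "cyclically_ordered L a b c d \<longleftrightarrow> a < L \<and> b < L \<and> c < L \<and> d < L \<and>
     (a < b \<and> b < c \<and> c < d \<or> b < c \<and> c < d \<and> d < a \<or>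
      c < d \<and> d < a \<and> a < b \<or> d < a \<and> a < b \<and> b < c)"

definition cyclically_avoids_1342 :: "nat list \<Rightarrow> bool" where
  "cyclically_avoids_1342 w \<longleftrightarrow>
     (\<forall>a b c d. cyclically_ordered (length w) a b c d \<longrightarrow> \<not> pattern_1342_at w a b c d)"

lemma contains_1342_iff:
  "contains_pattern w [1,3,4,2] \<longleftrightarrow>
     (\<exists>a b c d. a < b \<and> b < c \<and> c < d \<and> d < length w \<and> pattern_1342_at w a b c d)"
proof
  assume "contains_pattern w [1,3,4,2]"
  then obtain idx where mono: "\<forall>a b. a < b \<and> b < length [1,3,4,2::nat] \<longrightarrow> idx a < idx b"
    and range: "\<forall>a < length [1,3,4,2::nat]. idx a < length w"
    and order: "\<forall>a < length [1,3,4,2::nat]. \<forall>b < length [1,3,4,2::nat].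
                  w ! idx a < w ! idx b \<longleftrightarrow> [1,3,4,2::nat] ! a < [1,3,4,2] ! b"
    unfolding contains_pattern_def by blast
  have "pattern_1342_at w (idx 0) (idx 1) (idx 2) (idx 3)"
    using order[rule_format, of 0 3] order[rule_format, of 3 1] order[rule_format, of 1 2]
    unfolding pattern_1342_at_def by simp
  moreover have "idx 0 < idx 1" "idx 1 < idx 2" "idx 2 < idx 3" "idx 3 < length w"
    using mono range by simp_all
  ultimately show "\<exists>a b c d. a < b \<and> b < c \<and> c < d \<and> d < length w \<and> pattern_1342_at w a b c d"
    by blast
next
  assume "\<exists>a b c d. a < b \<and> b < c \<and> c < d \<and> d < length w \<and> pattern_1342_at w a b c d"
  then obtain a b c d where pos: "a < b" "b < c" "c < d" "d < length w"
    and pat: "pattern_1342_at w a b c d" by blast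
  let ?idx = "\<lambda>i::nat. [a, b, c, d] ! i"
  have "w ! ?idx i < w ! ?idx i' \<longleftrightarrow> [1,3,4,2::nat] ! i < [1,3,4,2] ! i'"
    if "i < 4" "i' < 4" for i i'
    using that pat unfolding pattern_1342_at_def
    by (auto simp: less_Suc_eq numeral_eq_Suc)
  moreover have "?idx i < ?idx i'" if "i < i'" "i' < 4" for i i'
    using that pos by (auto simp: less_Suc_eq numeral_eq_Suc)
  moreover have "?idx i < length w" if "i < 4" for i
    using that pos by (auto simp: less_Suc_eq numeral_eq_Suc)
  ultimately show "contains_pattern w [1,3,4,2]"
    unfolding contains_pattern_def by (intro exI[of _ ?idx]) simp
qed

lemma add_mod_eq_if:
  "(r::nat) < L \<Longrightarrow> i < L \<Longrightarrow> (r + i) mod L = (if r + i < L then r + i else r + i - L)"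
  using le_mod_geq[of L "r + i"] by auto

lemma cyclically_ordered_rotate:
  assumes "r < L" "a < b" "b < c" "c < d" "d < L"
  shows "cyclically_ordered L ((r + a) mod L) ((r + b) mod L) ((r + c) mod L) ((r + d) mod L)"
  using assms by (simp add: cyclically_ordered_def add_mod_eq_if) linarith

lemma cyclically_ordered_unrotate:
  assumes "cyclically_ordered L a b c d"
  obtains r a' b' c' d' where "r < L" "a' < b'" "b' < c'" "c' < d'" "d' < L"
    "a = (r + a') mod L" "b = (r + b') mod L" "c = (r + c') mod L" "d = (r + d') mod L"
proof -
  let ?shift = "\<lambda>x. if a \<le> x then x - a else x + L - a"
  have "a < L" using assms unfolding cyclically_ordered_def by simp
  have shift: "(a + ?shift x) mod L = x" if "x < L" for x
  proof (cases "a \<le> x")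
    case False
    then have "a + ?shift x = x + L" using \<open>a < L\<close> by simp
    then show ?thesis using that by simp
  qed (use that in simp)
  have range: "b < L" "c < L" "d < L" using assms unfolding cyclically_ordered_def by auto
  have order: "0 < ?shift b" "?shift b < ?shift c" "?shift c < ?shift d" "?shift d < L"
    using assms unfolding cyclically_ordered_def by auto
  have start: "a = (a + 0) mod L" using \<open>a < L\<close> by simp
  show ?thesis
    using that[OF \<open>a < L\<close> order start shift[OF range(1), symmetric] shift[OF range(2), symmetric]
        shift[OF range(3), symmetric]] .
qed

lemma rotations_avoid_1342_iff:
  "(\<forall>r < length w. avoids (rotate r w) [1,3,4,2]) \<longleftrightarrow> cyclically_avoids_1342 w"
  unfolding avoids_def cyclically_avoids_1342_def
proof (intro iffI allI impI notI)
  fix a b c d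
  assume avoid: "\<forall>r < length w. \<not> contains_pattern (rotate r w) [1,3,4,2]"
    and ord: "cyclically_ordered (length w) a b c d" and pat: "pattern_1342_at w a b c d"
  obtain r a' b' c' d' where pos: "r < length w" "a' < b'" "b' < c'" "c' < d'" "d' < length w"
    and "a = (r + a') mod length w" "b = (r + b') mod length w"
      "c = (r + c') mod length w" "d = (r + d') mod length w"
    using cyclically_ordered_unrotate[OF ord] .
  then have "pattern_1342_at (rotate r w) a' b' c' d'"
    using pat by (simp add: pattern_1342_at_def nth_rotate)
  then have "contains_pattern (rotate r w) [1,3,4,2]"
    unfolding contains_1342_iff using pos by auto
  then show False using avoid pos(1) by blast
next
  fix r
  assume avoid: "\<forall>a b c d. cyclically_ordered (length w) a b c d \<longrightarrow> \<not> pattern_1342_at w a b c d"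
    and "r < length w" "contains_pattern (rotate r w) [1,3,4,2]"
  then obtain a b c d where pos: "r < length w" "a < b" "b < c" "c < d" "d < length w"
    and pat: "pattern_1342_at (rotate r w) a b c d"
    unfolding contains_1342_iff by auto
  let ?L = "length w"
  have "pattern_1342_at w ((r + a) mod ?L) ((r + b) mod ?L) ((r + c) mod ?L) ((r + d) mod ?L)"
    using pat pos by (simp add: pattern_1342_at_def nth_rotate)
  then show False using avoid cyclically_ordered_rotate[OF pos] by blast
qed

lemma cyclically_avoids_1342_butlast:
  assumes "cyclically_avoids_1342 (xs @ [y])"
  shows "cyclically_avoids_1342 xs"
  unfolding cyclically_avoids_1342_def
proof (intro allI impI notI)
  fix a b c d
  assume ord: "cyclically_ordered (length xs) a b c d" and pat: "pattern_1342_at xs a b c d"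
  then have "a < length xs" "b < length xs" "c < length xs" "d < length xs"
    unfolding cyclically_ordered_def by simp_all
  then have "pattern_1342_at (xs @ [y]) a b c d"
    using pat unfolding pattern_1342_at_def by (simp add: nth_append)
  moreover have "cyclically_ordered (length (xs @ [y])) a b c d"
    using ord unfolding cyclically_ordered_def by auto
  ultimately show False using assms unfolding cyclically_avoids_1342_def by blast
qed

lemma cyclically_avoids_1342_snoc:
  assumes avoid: "cyclically_avoids_1342 xs" and dist: "distinct xs" and len: "length xs = m"
    and "2 \<le> m" "xs ! 0 = 1" "xs ! 1 = m" "set xs \<subseteq> {1..m}" "m < y"
  shows "cyclically_avoids_1342 (xs @ [y])"
  unfolding cyclically_avoids_1342_def
proof (intro allI impI notI)
  fix a b c d
  assume ord: "cyclically_ordered (length (xs @ [y])) a b c d"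
    and pat: "pattern_1342_at (xs @ [y]) a b c d"
  have val: "xs ! i \<in> {1..m}" if "i < m" for i
    using that len nth_mem[of i xs] \<open>set xs \<subseteq> {1..m}\<close> by (simp add: subset_iff)
  have nth: "(xs @ [y]) ! i = (if i < m then xs ! i else y)" if "i \<le> m" for i
    using that len by (auto simp: nth_append)
  have pos: "a \<le> m" "b \<le> m" "c \<le> m" "d \<le> m"
    using ord len unfolding cyclically_ordered_def by auto
  have small: "a < m" "b < m" "d < m"
    using pat val[of b] val[of c] val[of d] \<open>m < y\<close> pos
    unfolding pattern_1342_at_def nth[OF pos(1)] nth[OF pos(2)] nth[OF pos(3)] nth[OF pos(4)]
    by (auto split: if_splits)
  show False
  proof (cases "c < m")
    case True
    then have "cyclically_ordered (length xs) a b c d" "pattern_1342_at xs a b c d"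
      using ord pat small len by (auto simp: cyclically_ordered_def pattern_1342_at_def nth_append)
    then show False using avoid unfolding cyclically_avoids_1342_def by blast
  next
    case False
    \<comment> \<open>Then \<open>y\<close> plays the role of the 4; the entry \<open>m\<close>, which follows \<open>y\<close>
      cyclically after only the entry 1, can take its place.\<close>
    then have "c = m" using pos by simp
    then have order: "d < a" "a < b" using ord small len unfolding cyclically_ordered_def by auto
    have entries: "xs ! a < xs ! d" "xs ! d < xs ! b"
      using pat small len unfolding pattern_1342_at_def by (simp_all add: nth_append)
    have "d \<noteq> 0"
    proof
      assume "d = 0"
      then show False using entries val[of a] small \<open>xs ! 0 = 1\<close> by simp
    qed
    moreover have "d \<noteq> 1"
    proof
      assume "d = 1"
      then show False using entries val[of b] small \<open>xs ! 1 = m\<close> by simp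
    qed
    ultimately have "1 < d" by simp
    have "xs ! b \<noteq> xs ! 1"
      using nth_eq_iff_index_eq[OF dist, of b 1] small order \<open>1 < d\<close> len by simp
    then have "xs ! b < xs ! 1" using val[of b] small \<open>xs ! 1 = m\<close> by simp
    then have "cyclically_ordered (length xs) a b 1 d" "pattern_1342_at xs a b 1 d"
      using order entries small \<open>1 < d\<close> len
      unfolding cyclically_ordered_def pattern_1342_at_def by auto
    then show False using avoid unfolding cyclically_avoids_1342_def by blast
  qed
qed

section \<open>Deleting the largest entry from the cycle\<close>

lemma preimage_max_before_preimage_two:
  assumes cyc: "cyclic_perm (Suc m) p" and avoid: "cyclically_avoids_1342 (cycle_form (Suc m) p)"
    and "3 \<le> m" "p 1 = m" "p (Suc m) = 1" "p j = Suc m" "p t = 2" "t \<in> {1..Suc m}"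
  shows "j < t"
proof (rule ccontr)
  \<comment> \<open>Otherwise the entries 2, j, Suc m, t occur in this cyclic order in the cycle form
    and form a 1342.\<close>
  assume "\<not> j < t"
  define w where "w = cycle_form (Suc m) p"
  have inj: "inj p" using cyc permutes_inj unfolding cyclic_perm_def by blast
  have dist: "distinct w" and set: "set w = {1..Suc m}"
    using cycle_form_cyclic_perm[OF cyc] by (simp_all add: w_def)
  have "(p ^^ m) 1 = Suc m" using funpow_cyclic_perm_pred[OF cyc \<open>p (Suc m) = 1\<close>] .
  then have last: "w ! m = Suc m" by (simp add: w_def cycle_form_nth)
  have "p ((p ^^ (m - 1)) 1) = p j"
    using \<open>(p ^^ m) 1 = Suc m\<close> \<open>3 \<le> m\<close> \<open>p j = Suc m\<close> by (cases m) simp_all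
  then have before_last: "w ! (m - 1) = j"
    using inj by (simp add: w_def cycle_form_nth inj_eq)
  obtain u where u: "u < Suc m" "w ! u = t"
    using \<open>t \<in> {1..Suc m}\<close> set by (metis in_set_conv_nth length_cycle_form w_def)
  have "t \<noteq> Suc m" using \<open>p t = 2\<close> \<open>p (Suc m) = 1\<close> by auto
  then have "u \<noteq> m" using u last by auto
  then have next_two: "w ! Suc u = 2" "Suc u < Suc m"
    using u \<open>p t = 2\<close> by (simp_all add: w_def cycle_form_nth)
  have "t \<noteq> 1" using \<open>p 1 = m\<close> \<open>p t = 2\<close> \<open>3 \<le> m\<close> by auto
  moreover have "t \<noteq> 2"
    using nth_eq_iff_index_eq[OF dist, of u "Suc u"] u next_two by (simp add: w_def)
  ultimately have "2 < t" using \<open>t \<in> {1..Suc m}\<close> by simp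
  have "t \<noteq> j" using \<open>p t = 2\<close> \<open>p j = Suc m\<close> \<open>3 \<le> m\<close> by auto
  then have "t < j" using \<open>\<not> j < t\<close> by simp
  have "j \<noteq> Suc m" using \<open>p j = Suc m\<close> \<open>p (Suc m) = 1\<close> \<open>3 \<le> m\<close> by auto
  moreover have "j \<in> {1..Suc m}"
    using before_last set \<open>3 \<le> m\<close> by (metis length_cycle_form nth_mem w_def diff_less_Suc less_SucI)
  ultimately have "j < Suc m" by simp
  have "Suc u \<noteq> m - 1" using before_last next_two \<open>2 < t\<close> \<open>t < j\<close> by auto
  moreover have "Suc u \<noteq> m" using last next_two \<open>3 \<le> m\<close> by auto
  ultimately have "cyclically_ordered (Suc m) (Suc u) (m - 1) m u"
    using next_two unfolding cyclically_ordered_def by auto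
  moreover have "pattern_1342_at w (Suc u) (m - 1) m u"
    unfolding pattern_1342_at_def
    using before_last last next_two u \<open>2 < t\<close> \<open>t < j\<close> \<open>j < Suc m\<close> by simp
  ultimately show False using avoid unfolding cyclically_avoids_1342_def w_def by auto
qed

lemma has_decreasing_subseq_remove_last:
  assumes perm: "p permutes {1..Suc m}" and "2 \<le> m" "p (Suc m) = 1" "p j = Suc m" "p t = 2"
    "j < t" "t \<in> {1..Suc m}"
    and dec: "has_decreasing_subseq (transpose 1 (Suc m) \<circ> p) {1..m} K"
  shows "has_decreasing_subseq p {1..Suc m} (Suc K)"
proof -
  let ?s = "transpose 1 (Suc m) \<circ> p"
  have inj: "inj p" using perm by (rule permutes_inj)
  have t: "t \<in> {1..m}" using assms(3,5,7) by (auto simp: le_Suc_eq)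
  have big: "2 < p x" if "x \<in> {1..m}" "x \<noteq> t" for x
  proof -
    have "p x \<noteq> p (Suc m)" "p x \<noteq> p t" using that inj by (auto simp: inj_eq)
    moreover have "p x \<in> {1..Suc m}" using that permutes_in_image[OF perm] by auto
    ultimately show ?thesis using assms(3,5) by auto
  qed
  have s_eq: "?s x = p x" if "x \<in> {1..m} - {j}" for x
  proof -
    have "p x \<noteq> p (Suc m)" "p x \<noteq> p j" using that inj by (auto simp: inj_eq)
    then show ?thesis using assms(3,4) by simp
  qed
  have "has_decreasing_subseq ?s ({1..m} - {j}) K"
  proof (rule has_decreasing_subseq_exchange[OF dec _ t])
    show "inj_on ?s {1..m}" using inj_compose[OF inj_transpose inj] by (rule inj_on_subset) simp
    show "t \<noteq> j" using \<open>j < t\<close> by simp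
    show "j < t \<longleftrightarrow> ?s j < ?s t" using assms(2,4,5,6) by simp
    fix x assume x: "x \<in> {1..m}" "x \<noteq> j" "x \<noteq> t"
    then show "(x < t \<longleftrightarrow> x < j) \<and> (?s x < ?s t \<longleftrightarrow> ?s x < ?s j)"
      if "x < j \<longleftrightarrow> ?s j < ?s x"
      using that big[OF x(1,3)] s_eq[of x] x assms(2,4,5,6) by auto
  qed
  then have "has_decreasing_subseq p ({1..m} - {j}) K"
    using s_eq by (rule has_decreasing_subseq_cong)
  then have "has_decreasing_subseq p (insert (Suc m) ({1..m} - {j})) (Suc K)"
    by (rule has_decreasing_subseq_snoc) (use big assms(3,5) in force)
  then show ?thesis by (rule has_decreasing_subseq_mono) auto
qed

lemma has_decreasing_subseq_insert_last:
  assumes perm: "s permutes {1..m}" and "2 \<le> m" "s 1 = m"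
    and dec: "has_decreasing_subseq (transpose 1 (Suc m) \<circ> s) {1..Suc m} (Suc K)"
  shows "has_decreasing_subseq s {1..m} K"
proof -
  let ?p = "transpose 1 (Suc m) \<circ> s"
  have inj: "inj s" using perm by (rule permutes_inj)
  have range: "s x \<in> {1..m}" if "x \<in> {1..m}" for x using that permutes_in_image[OF perm] by simp
  have "1 \<in> s ` {1..m}" using permutes_image[OF perm] \<open>2 \<le> m\<close> by simp
  then obtain j where "1 = s j" "j \<in> {1..m}" by (rule imageE)
  then have j: "j \<in> {1..m}" "s j = 1" by simp_all
  have "j \<noteq> 1" using j \<open>s 1 = m\<close> \<open>2 \<le> m\<close> by auto
  have p_eq: "?p x = s x" if "x \<in> {1..m} - {j}" for x
  proof -
    have "s x \<noteq> s j" using that inj by (simp add: inj_eq)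
    then show ?thesis using j(2) range[of x] that by simp
  qed
  have "has_decreasing_subseq ?p {1..m} K"
    using has_decreasing_subseq_butlast[of ?p "Suc m" "{1..m}" K] dec
    by (simp add: atLeastAtMostSuc_conv)
  then have "has_decreasing_subseq ?p ({1..m} - {j}) K"
  proof (rule has_decreasing_subseq_exchange)
    show "inj_on ?p {1..m}" using inj_compose[OF inj_transpose inj] by (rule inj_on_subset) simp
    show "1 \<in> {1..m}" "1 \<noteq> j" using \<open>j \<noteq> 1\<close> \<open>2 \<le> m\<close> by auto
    show "j < 1 \<longleftrightarrow> ?p j < ?p 1" using j \<open>s 1 = m\<close> \<open>2 \<le> m\<close> by simp
    fix x assume x: "x \<in> {1..m}" "x \<noteq> j" "x \<noteq> 1"
    have "s x \<noteq> s 1" using x(3) inj by (auto simp: inj_eq)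
    then show "(x < 1 \<longleftrightarrow> x < j) \<and> (?p x < ?p 1 \<longleftrightarrow> ?p x < ?p j)"
      if "x < j \<longleftrightarrow> ?p j < ?p x"
      using that p_eq[of x] x range[OF x(1)] j \<open>s 1 = m\<close> \<open>2 \<le> m\<close> by auto
  qed
  then have "has_decreasing_subseq s ({1..m} - {j}) K"
    using p_eq by (rule has_decreasing_subseq_cong)
  then show ?thesis by (rule has_decreasing_subseq_mono) auto
qed

definition avoiding_cycle :: "nat \<Rightarrow> nat \<Rightarrow> (nat \<Rightarrow> nat) \<Rightarrow> bool" where
  "avoiding_cycle N K p \<longleftrightarrow> cyclic_perm N p \<and> \<not> has_decreasing_subseq p {1..N} K \<and>
     cyclically_avoids_1342 (cycle_form N p)"

lemma avoiding_cycle_iff: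
  "avoiding_cycle N K p \<longleftrightarrow> cyclic_perm N p \<and> avoids (one_line N p) (delta K) \<and>
     (\<forall>i < N. avoids (rotate i (cycle_form N p)) [1,3,4,2])"
  using rotations_avoid_1342_iff[of "cycle_form N p"]
  by (simp add: avoiding_cycle_def avoids_def contains_delta_iff)

lemma avoiding_cycle_remove_last:
  assumes "avoiding_cycle (Suc m) (Suc K) p" "p 1 = m" "p (Suc m) = 1" "2 \<le> m" "3 \<le> K"
  shows "avoiding_cycle m K (transpose 1 (Suc m) \<circ> p) \<and> (transpose 1 (Suc m) \<circ> p) 1 = m"
proof -
  let ?s = "transpose 1 (Suc m) \<circ> p"
  have cyc: "cyclic_perm (Suc m) p" and dec_free: "\<not> has_decreasing_subseq p {1..Suc m} (Suc K)"
    and avoid: "cyclically_avoids_1342 (cycle_form (Suc m) p)"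
    using assms(1) unfolding avoiding_cycle_def by simp_all
  have perm: "p permutes {1..Suc m}" using cyc unfolding cyclic_perm_def by simp
  note cycle = cyclic_perm_remove_last[OF cyc assms(3)]
  have "cyclically_avoids_1342 (cycle_form m ?s)"
    using avoid cyclically_avoids_1342_butlast assms(4) by (simp add: cycle(2))
  moreover have "\<not> has_decreasing_subseq ?s {1..m} K"
  proof
    assume dec: "has_decreasing_subseq ?s {1..m} K"
    show False
    proof (cases "m = 2")
      case True
      then show False using has_decreasing_subseq_card[OF dec] \<open>3 \<le> K\<close> by simp
    next
      case False
      have "Suc m \<in> p ` {1..Suc m}" "2 \<in> p ` {1..Suc m}"
        using permutes_image[OF perm] assms(4) by auto
      then obtain j t where "Suc m = p j" "2 = p t" "t \<in> {1..Suc m}" by (auto elim!: imageE)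
      then have j: "p j = Suc m" and t: "p t = 2" "t \<in> {1..Suc m}" by simp_all
      have "3 \<le> m" using False assms(4) by simp
      have "j < t" by (rule preimage_max_before_preimage_two[OF cyc avoid \<open>3 \<le> m\<close> assms(2,3) j t])
      then show False
        using has_decreasing_subseq_remove_last[OF perm assms(4,3) j t(1) _ t(2) dec] dec_free
        by blast
    qed
  qed
  ultimately show ?thesis using cycle(1) assms(2,4) unfolding avoiding_cycle_def by simp
qed

lemma avoiding_cycle_insert_last:
  assumes "avoiding_cycle m K s" "s 1 = m" "2 \<le> m"
  shows "avoiding_cycle (Suc m) (Suc K) (transpose 1 (Suc m) \<circ> s) \<and>
    (transpose 1 (Suc m) \<circ> s) 1 = m \<and> (transpose 1 (Suc m) \<circ> s) (Suc m) = 1"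
proof -
  let ?p = "transpose 1 (Suc m) \<circ> s"
  have cyc: "cyclic_perm m s" and dec_free: "\<not> has_decreasing_subseq s {1..m} K"
    and avoid: "cyclically_avoids_1342 (cycle_form m s)"
    using assms(1) unfolding avoiding_cycle_def by simp_all
  have perm: "s permutes {1..m}" using cyc unfolding cyclic_perm_def by simp
  have "1 \<le> m" using assms(3) by simp
  note cycle = cyclic_perm_insert_last[OF cyc \<open>1 \<le> m\<close>]
  note cf = cycle_form_cyclic_perm[OF cyc \<open>1 \<le> m\<close>]
  have "cyclically_avoids_1342 (cycle_form m s @ [Suc m])"
  proof (rule cyclically_avoids_1342_snoc[OF avoid cf(1)])
    show "cycle_form m s ! 0 = 1" using \<open>1 \<le> m\<close> by (simp add: cycle_form_nth)
    show "cycle_form m s ! 1 = m" using assms(2,3) by (simp add: cycle_form_nth)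
  qed (use assms(3) cf(2) in simp_all)
  then have "cyclically_avoids_1342 (cycle_form (Suc m) ?p)" by (simp only: cycle(2))
  moreover have "\<not> has_decreasing_subseq ?p {1..Suc m} (Suc K)"
    using has_decreasing_subseq_insert_last[OF perm assms(3,2)] dec_free by blast
  moreover have "?p 1 = m" "?p (Suc m) = 1"
    using assms(2,3) permutes_not_in[OF perm, of "Suc m"] by simp_all
  ultimately show ?thesis
    using cycle(1) assms(3) unfolding avoiding_cycle_def by simp
qed

theorem lemma3p5:
  fixes n k :: nat
  assumes "n \<ge> 3" and "k \<ge> 4"
  shows "card {p. cyclic_perm n p \<and> avoids (one_line n p) (delta k)
       \<and> (\<forall>i < n. avoids (rotate i (cycle_form n p)) [1,3,4,2])
       \<and> p 1 = n - 1 \<and> p n = 1}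
         = b_circ_1342 (n - 1) (k - 1)"
proof -
  define m K where "m = n - 1" and "K = k - 1"
  then have n: "n = Suc m" "2 \<le> m" and k: "k = Suc K" "3 \<le> K" using assms by simp_all
  let ?T = "transpose 1 (Suc m)"
  let ?A = "{p. avoiding_cycle (Suc m) (Suc K) p \<and> p 1 = m \<and> p (Suc m) = 1}"
  let ?B = "{s. avoiding_cycle m K s \<and> s 1 = m}"
  have "bij_betw ((\<circ>) ?T) ?A ?B"
  proof (rule bij_betwI[where g = "(\<circ>) ?T"])
    show "(\<circ>) ?T \<in> ?A \<rightarrow> ?B"
      using avoiding_cycle_remove_last[OF _ _ _ n(2) k(2)] by auto
    show "(\<circ>) ?T \<in> ?B \<rightarrow> ?A"
      using avoiding_cycle_insert_last[OF _ _ n(2)] by auto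
  qed (simp_all flip: comp_assoc)
  then have "card ?A = card ?B" by (rule bij_betw_same_card)
  then show ?thesis unfolding b_circ_1342_def n(1) k(1) by (simp add: avoiding_cycle_iff)
qed

end
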